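(* Let $d\ge 1$, let $\Omega\subset\mathbb{R}^d$ be a bounded domain, let $f:\Omega\to\mathbb{R}^d$ be an input function, let $g\in\mathbb{R}^d$ and let $R\in\mathbb{R}^{d\times d}$ be an orthogonal matrix. Define $\tilde\Omega:=\{Rx+g:x\in\Omega\}$ and $\tilde f:\tilde\Omega\to\mathbb{R}^d$ by $\tilde f(Rx+g):=Rf(x)$. Let $\tilde{\mathcal{G}}[\,\cdot\,;\theta]$ be the INO-vector operator with output $\bm{x}(x,L\tau)$ described in the context, with any fixed parameter set $\theta$. Then for every $x\in\Omega$, $$\tilde{\mathcal{G}}[\tilde f;\theta](Rx+g)=R\,\tilde{\mathcal{G}}[f;\theta](x)+g,$$ where the left-hand side is computed on $\tilde\Omega$ and the right-hand side on $\Omega$. That is, this architecture is translation- and rotation-equivariant.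
   Context: INO-vector architecture with equivariant projection. Fix integers $d_h\ge1$, $L\ge1$, a fictitious time step $\tau>0$, and an activation function $\sigma:\mathbb{R}\to\mathbb{R}$ (applied componentwise). The parameter set $\theta$ consists of $P,p\in\mathbb{R}^{d_h}$, $W\in\mathbb{R}^{d_h\times d_h}$, $c\in\mathbb{R}^{d_h}$, a kernel function $\kappa(\cdot;v)$ with values in $\mathbb{R}^{d_h\times d_h}$, and a scalar-valued function $\phi(\cdot;w):\mathbb{R}^{d_h}\to\mathbb{R}$. Edge encoding: for points $x,y$ of the domain, $\overline{y-x}$ denotes a frame-invariant encoding of the edge from $x$ to $y$; in 2D, $\overline{y-x}:=[|y-x|\cos\vartheta,\ |y-x|\sin\vartheta]$, with $|\cdot|$ the Euclidean norm and $\vartheta$ the orientation of $y-x$ relative to a local reference edge fixed in the body (e.g. the vector between two fixed nodes of the undeformed configuration); in 3D it is built analogously from $|y-x|$ and two orientation angles. Since the reference edge moves with the body, the encoding attached to $(Rx+g,Ry+g)$ in the transformed frame coincides with $\overline{y-x}$. Given an input $f$ on a domain $\Omega$, define: $h(x,0):=P|f(x)|+p$, $\bm{x}(x,0):=x$; $m(x,y):=\kappa(\overline{y-x},|f(x)|,|f(y)|;v)$; for $j=0,\dots,L-1$, $$h(x,(j+1)\tau):=h(x,j\tau)+\tau\,\sigma\Big(Wh(x,j\tau)+\int_\Omega m(x,y)h(y,j\tau)\,dy+c\Big),$$ $$\bm{x}(x,(j+1)\tau):=\bm{x}(x,j\tau)+\tau\int_\Omega (x-y)\,\phi\big(m(x,y)h(y,j\tau);w\big)\,dy;$$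 output $\tilde{\mathcal{G}}[f;\theta](x):=\bm{x}(x,L\tau)$. All integrals are assumed to exist. *)

theory Defs
  imports "HOL-Analysis.Analysis"
begin

text \<open>Parameter set theta of the INO-vector architecture.
  'h is the (finite) index type of the hidden dimension d_h, 'e is the type of
  values of the frame-invariant edge encoding (e.g. real^2 in 2D).\<close>
record ('h, 'e) ino_params =
  Pv    :: "real ^ 'h"
  pv    :: "real ^ 'h"
  Wm    :: "real ^ 'h ^ 'h"
  cv    :: "real ^ 'h"
  kappa :: "'e \<Rightarrow> real \<Rightarrow> real \<Rightarrow> real ^ 'h ^ 'h"
  phi   :: "real ^ 'h \<Rightarrow> real"

definition ino_m ::
  "('h::finite, 'e) ino_params \<Rightarrow> ('a \<Rightarrow> 'a \<Rightarrow> 'e) \<Rightarrow> ('a \<Rightarrow> 'b::real_normed_vector)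
   \<Rightarrow> 'a \<Rightarrow> 'a \<Rightarrow> real ^ 'h ^ 'h" where
  "ino_m th enc f x y = kappa th (enc x y) (norm (f x)) (norm (f y))"

definition cw :: "(real \<Rightarrow> real) \<Rightarrow> real ^ 'h \<Rightarrow> real ^ 'h" where
  "cw \<sigma> v = (\<chi> i. \<sigma> (v $ i))"

fun ino_h ::
  "(real \<Rightarrow> real) \<Rightarrow> real \<Rightarrow> ('h::finite, 'e) ino_params \<Rightarrow> (real^'n \<Rightarrow> real^'n \<Rightarrow> 'e)
   \<Rightarrow> (real^'n::finite) set \<Rightarrow> (real^'n \<Rightarrow> real^'n) \<Rightarrow> nat \<Rightarrow> real^'n \<Rightarrow> real^'h" where
  "ino_h \<sigma> \<tau> th enc \<Omega> f 0 = (\<lambda>x. norm (f x) *\<^sub>R Pv th + pv th)"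
| "ino_h \<sigma> \<tau> th enc \<Omega> f (Suc j) =
     (\<lambda>x. ino_h \<sigma> \<tau> th enc \<Omega> f j x
        + \<tau> *\<^sub>R cw \<sigma> (Wm th *v ino_h \<sigma> \<tau> th enc \<Omega> f j x
             + integral\<^sup>L (lebesgue_on \<Omega>)
                 (\<lambda>y. ino_m th enc f x y *v ino_h \<sigma> \<tau> th enc \<Omega> f j y)
             + cv th))"

fun ino_x ::
  "(real \<Rightarrow> real) \<Rightarrow> real \<Rightarrow> ('h::finite, 'e) ino_params \<Rightarrow> (real^'n \<Rightarrow> real^'n \<Rightarrow> 'e)
   \<Rightarrow> (real^'n::finite) set \<Rightarrow> (real^'n \<Rightarrow> real^'n) \<Rightarrow> nat \<Rightarrow> real^'n \<Rightarrow> real^'n" where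
  "ino_x \<sigma> \<tau> th enc \<Omega> f 0 = (\<lambda>x. x)"
| "ino_x \<sigma> \<tau> th enc \<Omega> f (Suc j) =
     (\<lambda>x. ino_x \<sigma> \<tau> th enc \<Omega> f j x
        + \<tau> *\<^sub>R integral\<^sup>L (lebesgue_on \<Omega>)
             (\<lambda>y. phi th (ino_m th enc f x y *v ino_h \<sigma> \<tau> th enc \<Omega> f j y) *\<^sub>R (x - y)))"

definition ino_vector ::
  "(real \<Rightarrow> real) \<Rightarrow> real \<Rightarrow> nat \<Rightarrow> ('h::finite, 'e) ino_params \<Rightarrow> (real^'n \<Rightarrow> real^'n \<Rightarrow> 'e)
   \<Rightarrow> (real^'n::finite) set \<Rightarrow> (real^'n \<Rightarrow> real^'n) \<Rightarrow> real^'n \<Rightarrow> real^'n" where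
  "ino_vector \<sigma> \<tau> L th enc \<Omega> f = ino_x \<sigma> \<tau> th enc \<Omega> f L"

end

theory Submission
  imports Defs
begin

(* Lebesgue measure is invariant under surjective isometries of a Euclidean space: such a map
   sends balls to balls of the same radius and null sets to null sets, so by the Vitali covering
   theorem it preserves the measure of open sets, and by outer regularity that of every Lebesgue
   set. Hence integrals over the moved domain pull back to integrals over the original one. Along
   this change of variables the edge encodings and the norms |f| are unchanged, so every hidden
   state h is invariant, while the kernel (x - y) of the position update is rotated by R; by
   linearity of the integral each position update is rotated as well, and the translation g
   enters only through the initial positions. *)

lemma isometry_image_ball:
  fixes T :: "'a::metric_space \<Rightarrow> 'a"
  assumes iso: "\<And>x y. dist (T x) (T y) = dist x y" and "surj T"
  shows "T ` ball x r = ball (T x) r"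
proof (intro equalityI subsetI)
  fix y assume "y \<in> ball (T x) r"
  moreover obtain z where "y = T z" using \<open>surj T\<close> by (metis surjD)
  ultimately show "y \<in> T ` ball x r" by (simp add: iso)
qed (auto simp: iso)

lemma bij_isometry:
  fixes T :: "'a::metric_space \<Rightarrow> 'a"
  assumes iso: "\<And>x y. dist (T x) (T y) = dist x y" and "surj T"
  shows "bij T"
  using \<open>surj T\<close> by (metis bijI injI iso dist_eq_0_iff)

lemma isometry_inv:
  fixes T :: "'a::metric_space \<Rightarrow> 'a"
  assumes iso: "\<And>x y. dist (T x) (T y) = dist x y" and "surj T"
  shows "\<And>x y. dist (inv T x) (inv T y) = dist x y" and "surj (inv T)"
proof -
  show "surj (inv T)"
    using bij_isometry[OF assms] by (simp add: bij_is_inj inj_imp_surj_inv)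
  show "dist (inv T x) (inv T y) = dist x y" for x y
    using \<open>surj T\<close> by (metis iso surj_f_inv_f)
qed

lemma negligible_isometry_image:
  fixes T :: "'a::euclidean_space \<Rightarrow> 'a"
  assumes iso: "\<And>x y. dist (T x) (T y) = dist x y" and "negligible S"
  shows "negligible (T ` S)"
  using \<open>negligible S\<close>
proof (rule negligible_locally_Lipschitz_image[OF order_refl])
  show "\<exists>U B. open U \<and> x \<in> U \<and> (\<forall>y \<in> S \<inter> U. norm (T y - T x) \<le> B * norm (y - x))" for x
    by (rule exI[of _ UNIV], rule exI[of _ 1]) (simp add: iso flip: dist_norm)
qed

lemma isometry_image_in_sets_lebesgue:
  fixes T :: "'a::euclidean_space \<Rightarrow> 'a"
  assumes iso: "\<And>x y. dist (T x) (T y) = dist x y" and "S \<in> sets lebesgue"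
  shows "T ` S \<in> sets lebesgue"
proof (rule sets_lebesgue_continuous_image[OF \<open>S \<in> sets lebesgue\<close>])
  show "continuous_on UNIV T"
    by (rule lipschitz_on_continuous_on[of 1]) (simp add: lipschitz_on_def iso)
qed (auto intro: negligible_isometry_image[OF iso])

lemma emeasure_lebesgue_ball_translate:
  fixes c :: "'a::euclidean_space"
  shows "emeasure lebesgue (ball c r) = emeasure lebesgue (ball (0::'a) r)"
proof (cases "r \<le> 0")
  case False
  then show ?thesis by (metis emeasure_lebesgue_ball_conv_unit_ball linorder_linear)
qed (simp add: ball_empty)

lemma emeasure_disjoint_balls_Un_negligible:
  fixes a :: "'i \<Rightarrow> 'a::euclidean_space"
  assumes "countable C" and disj: "pairwise (\<lambda>i j. disjnt (ball (a i) (r i)) (ball (a j) (r j))) C"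
    and "negligible N"
  shows "emeasure lebesgue ((\<Union>i\<in>C. ball (a i) (r i)) \<union> N)
       = (\<integral>\<^sup>+i. emeasure lebesgue (ball (0::'a) (r i)) \<partial>count_space C)"
proof -
  have "disjoint_family_on (\<lambda>i. ball (a i) (r i)) C"
    using disj by (auto simp: disjoint_family_on_def pairwise_def disjnt_def)
  have "emeasure lebesgue ((\<Union>i\<in>C. ball (a i) (r i)) \<union> N)
      = emeasure lebesgue (\<Union>i\<in>C. ball (a i) (r i))"
    using \<open>countable C\<close> \<open>negligible N\<close>
    by (intro emeasure_Un_null_set) (auto simp: negligible_iff_null_sets intro: sets.countable_UN'')
  also have "\<dots> = (\<integral>\<^sup>+i. emeasure lebesgue (ball (a i) (r i)) \<partial>count_space C)"
    using \<open>countable C\<close> \<open>disjoint_family_on _ C\<close> by (intro emeasure_UN_countable) auto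
  also have "\<dots> = (\<integral>\<^sup>+i. emeasure lebesgue (ball (0::'a) (r i)) \<partial>count_space C)"
    by (intro nn_integral_cong) (rule emeasure_lebesgue_ball_translate)
  finally show ?thesis .
qed

lemma emeasure_isometry_image_open:
  fixes T :: "'a::euclidean_space \<Rightarrow> 'a"
  assumes iso: "\<And>x y. dist (T x) (T y) = dist x y" and "surj T" and "open U"
  shows "emeasure lebesgue (T ` U) = emeasure lebesgue U"
proof -
  let ?K = "{(c, r). 0 < r \<and> ball c r \<subseteq> U}"
  let ?B = "\<lambda>i. ball (fst i) (snd i)"
  have "\<exists>i. i \<in> ?K \<and> x \<in> ?B i \<and> snd i < d" if "x \<in> U" "0 < d" for x d
  proof -
    obtain e where "e > 0" "ball x e \<subseteq> U"
      using \<open>open U\<close> \<open>x \<in> U\<close> open_contains_ball by blast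
    with \<open>0 < d\<close> show ?thesis
      by (intro exI[of _ "(x, min e (d/2))"]) auto
  qed
  then obtain C where C: "countable C" "C \<subseteq> ?K"
    and disj: "pairwise (\<lambda>i j. disjnt (?B i) (?B j)) C"
    and neg: "negligible (U - (\<Union>i\<in>C. ?B i))"
    by (rule Vitali_covering_theorem_balls[where S = U and K = ?K and a = fst and r = snd]) blast
  define N where "N = U - (\<Union>i\<in>C. ?B i)"
  have U_eq: "U = (\<Union>i\<in>C. ?B i) \<union> N"
    using C(2) unfolding N_def by fastforce
  have "inj T"
    using bij_isometry[OF iso \<open>surj T\<close>] by (rule bij_is_inj)
  have T_ball: "T ` ?B i = ball (T (fst i)) (snd i)" for i
    using isometry_image_ball[OF iso \<open>surj T\<close>] .
  have TU_eq: "T ` U = (\<Union>i\<in>C. ball (T (fst i)) (snd i)) \<union> T ` N"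
    by (subst U_eq) (simp add: image_Un image_UN T_ball)
  have "pairwise (\<lambda>i j. disjnt (ball (T (fst i)) (snd i)) (ball (T (fst j)) (snd j))) C"
    using disj \<open>inj T\<close> by (simp add: pairwise_def disjnt_def flip: T_ball image_Int)
  then have "emeasure lebesgue (T ` U)
      = (\<integral>\<^sup>+i. emeasure lebesgue (ball (0::'a) (snd i)) \<partial>count_space C)"
    unfolding TU_eq N_def
    by (rule emeasure_disjoint_balls_Un_negligible[OF C(1) _ negligible_isometry_image[OF iso neg]])
  also have "\<dots> = emeasure lebesgue U"
    by (subst U_eq)
      (rule emeasure_disjoint_balls_Un_negligible[OF C(1) disj neg[folded N_def], symmetric])
  finally show ?thesis .
qed

lemma emeasure_isometry_image_le:
  fixes T :: "'a::euclidean_space \<Rightarrow> 'a"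
  assumes iso: "\<And>x y. dist (T x) (T y) = dist x y" and "surj T" and S: "S \<in> sets lebesgue"
  shows "emeasure lebesgue (T ` S) \<le> emeasure lebesgue S"
proof (rule ennreal_le_epsilon)
  fix e :: real
  assume "0 < e"
  then obtain U where "open U" "S \<subseteq> U" "U - S \<in> lmeasurable"
    and small: "emeasure lebesgue (U - S) < ennreal e"
    using sets_lebesgue_outer_open[OF S] by metis
  have "emeasure lebesgue (T ` S) \<le> emeasure lebesgue (T ` U)"
    using \<open>S \<subseteq> U\<close> \<open>open U\<close>
    by (intro emeasure_mono image_mono isometry_image_in_sets_lebesgue[OF iso]) auto
  also have "\<dots> = emeasure lebesgue U"
    using emeasure_isometry_image_open[OF iso \<open>surj T\<close> \<open>open U\<close>] .
  also have "\<dots> = emeasure lebesgue (S \<union> (U - S))"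
    using \<open>S \<subseteq> U\<close> by (simp add: Un_absorb1)
  also have "\<dots> \<le> emeasure lebesgue S + emeasure lebesgue (U - S)"
    using S \<open>U - S \<in> lmeasurable\<close> by (intro emeasure_subadditive) auto
  also have "\<dots> \<le> emeasure lebesgue S + ennreal e"
    using small by (intro add_left_mono) simp
  finally show "emeasure lebesgue (T ` S) \<le> emeasure lebesgue S + ennreal e" .
qed

lemma emeasure_isometry_image:
  fixes T :: "'a::euclidean_space \<Rightarrow> 'a"
  assumes iso: "\<And>x y. dist (T x) (T y) = dist x y" and "surj T" and S: "S \<in> sets lebesgue"
  shows "emeasure lebesgue (T ` S) = emeasure lebesgue S"
proof (rule antisym)
  show "emeasure lebesgue (T ` S) \<le> emeasure lebesgue S"
    by (rule emeasure_isometry_image_le[OF iso \<open>surj T\<close> S])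
  have "emeasure lebesgue (inv T ` T ` S) \<le> emeasure lebesgue (T ` S)"
    by (rule emeasure_isometry_image_le[OF isometry_inv(1,2)[OF iso \<open>surj T\<close>]
          isometry_image_in_sets_lebesgue[OF iso S]])
  then show "emeasure lebesgue S \<le> emeasure lebesgue (T ` S)"
    by (simp add: image_inv_f_f bij_is_inj[OF bij_isometry[OF iso \<open>surj T\<close>]])
qed

lemma isometry_measurable_lebesgue:
  fixes T :: "'a::euclidean_space \<Rightarrow> 'a"
  assumes iso: "\<And>x y. dist (T x) (T y) = dist x y" and "surj T"
  shows "T \<in> lebesgue \<rightarrow>\<^sub>M lebesgue"
proof (rule measurableI)
  fix A :: "'a set"
  assume "A \<in> sets lebesgue"
  then show "T -` A \<inter> space lebesgue \<in> sets lebesgue"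
    using isometry_image_in_sets_lebesgue[OF isometry_inv(1)[OF iso \<open>surj T\<close>]]
    by (simp add: bij_vimage_eq_inv_image[OF bij_isometry[OF iso \<open>surj T\<close>]])
qed simp

lemma distr_isometry_lebesgue:
  fixes T :: "'a::euclidean_space \<Rightarrow> 'a"
  assumes iso: "\<And>x y. dist (T x) (T y) = dist x y" and "surj T"
  shows "distr lebesgue lebesgue T = lebesgue"
proof (rule measure_eqI)
  fix A :: "'a set"
  assume "A \<in> sets (distr lebesgue lebesgue T)"
  then have "A \<in> sets lebesgue" by simp
  then show "emeasure (distr lebesgue lebesgue T) A = emeasure lebesgue A"
    using isometry_measurable_lebesgue[OF iso \<open>surj T\<close>]
      emeasure_isometry_image[OF isometry_inv(1,2)[OF iso \<open>surj T\<close>]]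
    by (simp add: emeasure_distr bij_vimage_eq_inv_image[OF bij_isometry[OF iso \<open>surj T\<close>]])
qed simp

lemma integral_comp_measure_preserving:
  fixes G :: "'a \<Rightarrow> 'b::{banach, second_countable_topology}"
  assumes T: "T \<in> M \<rightarrow>\<^sub>M M" and U: "U \<in> M \<rightarrow>\<^sub>M M"
    and TU: "\<And>x. x \<in> space M \<Longrightarrow> T (U x) = x" and distr: "distr M M T = M"
  shows "integral\<^sup>L M (\<lambda>x. G (T x)) = integral\<^sup>L M G"
proof (cases "G \<in> borel_measurable M")
  case True
  then show ?thesis
    using integral_distr[OF T True] distr by simp
next
  case False
  have "(\<lambda>x. G (T x)) \<notin> borel_measurable M"
  proof
    assume "(\<lambda>x. G (T x)) \<in> borel_measurable M"
    then have "(\<lambda>x. G (T (U x))) \<in> borel_measurable M"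
      by (rule measurable_compose[OF U])
    moreover have "G \<in> borel_measurable M \<longleftrightarrow> (\<lambda>x. G (T (U x))) \<in> borel_measurable M"
      by (rule measurable_cong) (simp add: TU)
    ultimately show False
      using False by simp
  qed
  with False have "\<not> integrable M (\<lambda>x. G (T x))" "\<not> integrable M G"
    by (meson borel_measurable_integrable)+
  then show ?thesis
    by (simp add: not_integrable_integral_eq)
qed

lemma integral_lebesgue_on_isometry_image:
  fixes T :: "'a::euclidean_space \<Rightarrow> 'a"
    and G :: "'a \<Rightarrow> 'b::{banach, second_countable_topology}"
  assumes iso: "\<And>x y. dist (T x) (T y) = dist x y" and "surj T" and S: "S \<in> sets lebesgue"
  shows "integral\<^sup>L (lebesgue_on (T ` S)) G = integral\<^sup>L (lebesgue_on S) (\<lambda>x. G (T x))"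
proof -
  note inv = isometry_inv[OF iso \<open>surj T\<close>]
  have "integral\<^sup>L (lebesgue_on S) (\<lambda>x. G (T x))
      = integral\<^sup>L lebesgue (\<lambda>x. indicator (T ` S) (T x) *\<^sub>R G (T x))"
    using S bij_is_inj[OF bij_isometry[OF iso \<open>surj T\<close>]]
    by (simp add: integral_restrict_space indicator_def inj_image_mem_iff)
  also have "\<dots> = integral\<^sup>L lebesgue (\<lambda>y. indicator (T ` S) y *\<^sub>R G y)"
    by (rule integral_comp_measure_preserving[OF isometry_measurable_lebesgue[OF iso \<open>surj T\<close>]
          isometry_measurable_lebesgue[OF inv(1,2)] surj_f_inv_f[OF \<open>surj T\<close>]
          distr_isometry_lebesgue[OF iso \<open>surj T\<close>]])
  also have "\<dots> = integral\<^sup>L (lebesgue_on (T ` S)) G"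
    using isometry_image_in_sets_lebesgue[OF iso S] by (simp add: integral_restrict_space)
  finally show ?thesis ..
qed

lemma orthogonal_transformation_matrix_vector_mult:
  fixes R :: "real^'n^'n"
  assumes "orthogonal_matrix R"
  shows "orthogonal_transformation ((*v) R)"
  using assms by (simp add: orthogonal_transformation_matrix)

lemma norm_orthogonal_matrix_vector_mult:
  fixes R :: "real^'n^'n"
  assumes "orthogonal_matrix R"
  shows "norm (R *v v) = norm v"
  using orthogonal_transformation_matrix_vector_mult[OF assms] by (rule orthogonal_transformation_norm)

lemma dist_orthogonal_affine:
  fixes R :: "real^'n^'n"
  assumes "orthogonal_matrix R"
  shows "dist (R *v x + g) (R *v y + g) = dist x y"
  using orthogonal_transformation_matrix_vector_mult[OF assms]
  by (simp add: orthogonal_transformation_isometry)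

lemma surj_orthogonal_affine:
  fixes R :: "real^'n^'n"
  assumes "orthogonal_matrix R"
  shows "surj (\<lambda>x. R *v x + g)"
  unfolding surj_def
proof
  fix y
  obtain x where "R *v x = y - g"
    using orthogonal_transformation_surj[OF orthogonal_transformation_matrix_vector_mult[OF assms]]
    by (metis surjD)
  then show "\<exists>x. y = R *v x + g"
    by (intro exI[of _ x]) simp
qed

lemma integral_lebesgue_on_orthogonal_affine_image:
  fixes R :: "real^'n^'n" and G :: "real^'n \<Rightarrow> 'b::{banach, second_countable_topology}"
  assumes R: "orthogonal_matrix R" and \<Omega>: "\<Omega> \<in> sets lebesgue"
  shows "integral\<^sup>L (lebesgue_on ((\<lambda>x. R *v x + g) ` \<Omega>)) G
     = integral\<^sup>L (lebesgue_on \<Omega>) (\<lambda>y. G (R *v y + g))"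
  by (rule integral_lebesgue_on_isometry_image[where T = "\<lambda>x. R *v x + g",
        OF dist_orthogonal_affine[OF R] surj_orthogonal_affine[OF R] \<Omega>])

context
  fixes R :: "real^'n^'n" and g :: "real^'n" and \<Omega> :: "(real^'n) set"
    and f ft :: "real^'n \<Rightarrow> real^'n" and enc enct :: "real^'n \<Rightarrow> real^'n \<Rightarrow> 'e"
    and th :: "('h::finite, 'e) ino_params" and \<sigma> :: "real \<Rightarrow> real" and \<tau> :: real
  assumes R: "orthogonal_matrix R" and \<Omega>: "\<Omega> \<in> sets lebesgue"
    and ft: "\<And>x. x \<in> \<Omega> \<Longrightarrow> ft (R *v x + g) = R *v f x"
    and enc: "\<And>x y. x \<in> \<Omega> \<Longrightarrow> y \<in> \<Omega> \<Longrightarrow> enct (R *v x + g) (R *v y + g) = enc x y"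
begin

lemma ino_m_orthogonal_affine:
  assumes "x \<in> \<Omega>" "y \<in> \<Omega>"
  shows "ino_m th enct ft (R *v x + g) (R *v y + g) = ino_m th enc f x y"
  using assms by (simp add: ino_m_def ft enc norm_orthogonal_matrix_vector_mult[OF R])

lemma ino_h_orthogonal_affine_invariant:
  assumes "x \<in> \<Omega>"
  shows "ino_h \<sigma> \<tau> th enct ((\<lambda>x. R *v x + g) ` \<Omega>) ft j (R *v x + g)
         = ino_h \<sigma> \<tau> th enc \<Omega> f j x"
  using assms
proof (induction j arbitrary: x)
  case 0
  then show ?case
    by (simp add: ft norm_orthogonal_matrix_vector_mult[OF R])
next
  case (Suc j)
  let ?\<Omega>' = "(\<lambda>x. R *v x + g) ` \<Omega>"
  have "integral\<^sup>L (lebesgue_on ?\<Omega>')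
          (\<lambda>y. ino_m th enct ft (R *v x + g) y *v ino_h \<sigma> \<tau> th enct ?\<Omega>' ft j y)
      = integral\<^sup>L (lebesgue_on \<Omega>) (\<lambda>y. ino_m th enc f x y *v ino_h \<sigma> \<tau> th enc \<Omega> f j y)"
    unfolding integral_lebesgue_on_orthogonal_affine_image[OF R \<Omega>]
    using Suc by (intro Bochner_Integration.integral_cong) (simp_all add: ino_m_orthogonal_affine)
  with Suc show ?case by simp
qed

lemma ino_x_orthogonal_affine_equivariant:
  assumes int_x: "\<And>i x. i < j \<Longrightarrow> x \<in> \<Omega> \<Longrightarrow>
      integrable (lebesgue_on \<Omega>)
        (\<lambda>y. phi th (ino_m th enc f x y *v ino_h \<sigma> \<tau> th enc \<Omega> f i y) *\<^sub>R (x - y))"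
    and "x \<in> \<Omega>"
  shows "ino_x \<sigma> \<tau> th enct ((\<lambda>x. R *v x + g) ` \<Omega>) ft j (R *v x + g)
         = R *v ino_x \<sigma> \<tau> th enc \<Omega> f j x + g"
  using assms
proof (induction j arbitrary: x)
  case 0
  then show ?case by simp
next
  case (Suc j)
  let ?\<Omega>' = "(\<lambda>x. R *v x + g) ` \<Omega>"
  let ?F = "\<lambda>y. phi th (ino_m th enc f x y *v ino_h \<sigma> \<tau> th enc \<Omega> f j y) *\<^sub>R (x - y)"
  have "integral\<^sup>L (lebesgue_on ?\<Omega>')
          (\<lambda>y. phi th (ino_m th enct ft (R *v x + g) y *v ino_h \<sigma> \<tau> th enct ?\<Omega>' ft j y)
               *\<^sub>R (R *v x + g - y))
      = integral\<^sup>L (lebesgue_on \<Omega>) (\<lambda>y. R *v ?F y)"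
    unfolding integral_lebesgue_on_orthogonal_affine_image[OF R \<Omega>]
    using Suc.prems
    by (intro Bochner_Integration.integral_cong)
      (simp_all add: ino_m_orthogonal_affine ino_h_orthogonal_affine_invariant
        matrix_vector_mult_diff_distrib matrix_vector_mult_scaleR)
  also have "\<dots> = R *v integral\<^sup>L (lebesgue_on \<Omega>) ?F"
    using Suc.prems by (intro integral_bounded_linear) (simp_all add: linear_linear)
  finally show ?case
    using Suc by (simp add: matrix_vector_right_distrib matrix_vector_mult_scaleR)
qed

end

theorem theorem3:
  fixes \<Omega> :: "(real^'n) set" and f ft :: "real^'n \<Rightarrow> real^'n"
    and g :: "real^'n" and R :: "real^'n^'n"
    and \<sigma> :: "real \<Rightarrow> real" and \<tau> :: real and L :: nat
    and th :: "('h::finite, 'e) ino_params"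
    and enc enct :: "real^'n \<Rightarrow> real^'n \<Rightarrow> 'e"
  assumes "L \<ge> 1" and "\<tau> > 0"
    and "open \<Omega>" and "connected \<Omega>" and "\<Omega> \<noteq> {}" and "bounded \<Omega>"
    and "orthogonal_matrix R"
    and ft: "\<And>x. x \<in> \<Omega> \<Longrightarrow> ft (R *v x + g) = R *v f x"
    and enc: "\<And>x y. x \<in> \<Omega> \<Longrightarrow> y \<in> \<Omega> \<Longrightarrow> enct (R *v x + g) (R *v y + g) = enc x y"
    and int_h: "\<And>j x. j < L \<Longrightarrow> x \<in> \<Omega> \<Longrightarrow>
       integrable (lebesgue_on \<Omega>) (\<lambda>y. ino_m th enc f x y *v ino_h \<sigma> \<tau> th enc \<Omega> f j y)"
    and int_x: "\<And>j x. j < L \<Longrightarrow> x \<in> \<Omega> \<Longrightarrow>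
       integrable (lebesgue_on \<Omega>)
         (\<lambda>y. phi th (ino_m th enc f x y *v ino_h \<sigma> \<tau> th enc \<Omega> f j y) *\<^sub>R (x - y))"
    and "x \<in> \<Omega>"
  shows "ino_vector \<sigma> \<tau> L th enct ((\<lambda>x. R *v x + g) ` \<Omega>) ft (R *v x + g)
         = R *v ino_vector \<sigma> \<tau> L th enc \<Omega> f x + g"
proof -
  (* Besides the measurability of \<Omega> only int_x is needed: the hidden-state integrals agree
     pointwise after the change of variables, so they match without any integrability. *)
  have "\<Omega> \<in> sets lebesgue"
    using \<open>open \<Omega>\<close> by simp
  show ?thesis
    unfolding ino_vector_def by (rule ino_x_orthogonal_affine_equivariant) fact+
qed

end
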